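(* Let $A_1,\dots,A_N$ be trace class self-adjoint operators on a (separable) Hilbert space $\mathcal H$ with $\mathrm{Tr}\,A_i=0$ for each $1\le i\le N$. Suppose the joint numerical range $\{(\langle z,A_1z\rangle,\dots,\langle z,A_Nz\rangle): z\in\mathcal H,\ \|z\|=1\}$ is a convex subset of $\mathbb R^N$. Then there exists $z\in\mathcal H$ with $\|z\|=1$ such that $\langle z,A_iz\rangle=0$ for all $i=1,\dots,N$. *)

theory Defs
  imports "HOL-Analysis.Analysis"
begin

text \<open>Concrete model of a separable complex Hilbert space: every separable Hilbert
space is unitarily isomorphic to l2(D) for some index set D of naturals
(D = {..<n} in dimension n, D = UNIV in infinite dimension).\<close>

definition l2 :: "nat set \<Rightarrow> (nat \<Rightarrow> complex) set" where
  "l2 D = {x. (\<forall>k. k \<notin> D \<longrightarrow> x k = 0) \<and> (\<lambda>k. (cmod (x k))^2) summable_on D}"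

definition cinner :: "nat set \<Rightarrow> (nat \<Rightarrow> complex) \<Rightarrow> (nat \<Rightarrow> complex) \<Rightarrow> complex" where
  "cinner D x y = (\<Sum>\<^sub>\<infinity>k\<in>D. cnj (x k) * y k)"

definition l2norm :: "nat set \<Rightarrow> (nat \<Rightarrow> complex) \<Rightarrow> real" where
  "l2norm D x = sqrt (\<Sum>\<^sub>\<infinity>k\<in>D. (cmod (x k))^2)"

definition basis_vec :: "nat \<Rightarrow> (nat \<Rightarrow> complex)" where
  "basis_vec k = (\<lambda>j. if j = k then 1 else 0)"

text \<open>Bounded linear operators on l2(D) (only their values on l2(D) matter).\<close>
definition bounded_op :: "nat set \<Rightarrow> ((nat \<Rightarrow> complex) \<Rightarrow> (nat \<Rightarrow> complex)) \<Rightarrow> bool" where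
  "bounded_op D A \<longleftrightarrow>
     (\<forall>x\<in>l2 D. A x \<in> l2 D) \<and>
     (\<forall>x\<in>l2 D. \<forall>y\<in>l2 D. A (\<lambda>k. x k + y k) = (\<lambda>k. A x k + A y k)) \<and>
     (\<forall>x\<in>l2 D. \<forall>c. A (\<lambda>k. c * x k) = (\<lambda>k. c * A x k)) \<and>
     (\<exists>K. \<forall>x\<in>l2 D. l2norm D (A x) \<le> K * l2norm D x)"

definition is_adjoint :: "nat set \<Rightarrow> ((nat \<Rightarrow> complex) \<Rightarrow> (nat \<Rightarrow> complex))
     \<Rightarrow> ((nat \<Rightarrow> complex) \<Rightarrow> (nat \<Rightarrow> complex)) \<Rightarrow> bool" where
  "is_adjoint D A B \<longleftrightarrow> (\<forall>x\<in>l2 D. \<forall>y\<in>l2 D. cinner D x (A y) = cinner D (B x) y)"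

definition self_adjoint_op :: "nat set \<Rightarrow> ((nat \<Rightarrow> complex) \<Rightarrow> (nat \<Rightarrow> complex)) \<Rightarrow> bool" where
  "self_adjoint_op D A \<longleftrightarrow> bounded_op D A \<and> is_adjoint D A A"

definition positive_op :: "nat set \<Rightarrow> ((nat \<Rightarrow> complex) \<Rightarrow> (nat \<Rightarrow> complex)) \<Rightarrow> bool" where
  "positive_op D P \<longleftrightarrow> bounded_op D P \<and>
     (\<forall>x\<in>l2 D. Im (cinner D x (P x)) = 0 \<and> Re (cinner D x (P x)) \<ge> 0)"

text \<open>Trace class: Tr |A| < \<infinity>, where |A| is the positive square root of A^* A
(the unique positive P with P P = A^* A).\<close>
definition trace_class :: "nat set \<Rightarrow> ((nat \<Rightarrow> complex) \<Rightarrow> (nat \<Rightarrow> complex)) \<Rightarrow> bool" where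
  "trace_class D A \<longleftrightarrow> bounded_op D A \<and>
     (\<exists>S P. bounded_op D S \<and> is_adjoint D A S \<and> positive_op D P \<and>
        (\<forall>x\<in>l2 D. P (P x) = S (A x)) \<and>
        (\<lambda>k. Re (cinner D (basis_vec k) (P (basis_vec k)))) summable_on D)"

definition op_trace :: "nat set \<Rightarrow> ((nat \<Rightarrow> complex) \<Rightarrow> (nat \<Rightarrow> complex)) \<Rightarrow> complex" where
  "op_trace D A = (\<Sum>\<^sub>\<infinity>k\<in>D. cinner D (basis_vec k) (A (basis_vec k)))"

definition joint_numerical_range :: "nat set \<Rightarrow> ('n::finite \<Rightarrow> ((nat \<Rightarrow> complex) \<Rightarrow> (nat \<Rightarrow> complex)))
     \<Rightarrow> (real^'n) set" where
  "joint_numerical_range D A =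
     {(\<chi> i. Re (cinner D z (A i z))) | z. z \<in> l2 D \<and> l2norm D z = 1}"

end

(* The diagonal vectors d_k = (<e_k, A_i e_k>)_i lie in the joint numerical range and, for each
   coordinate, sum to Tr A_i = 0. A linear functional that is nonnegative on all d_k therefore
   vanishes on all of them; by the separating hyperplane theorem 0 lies in the convex hull of the
   d_k, hence in the convex joint numerical range.

   The analytic input is the absolute summability of the diagonal of a self-adjoint trace class A,
   i.e. |<e, A e>| <= <e, |A| e>. Without spectral calculus this is derived from P >= 0, P^2 = A^2:
   P commutes with A, and P - A >= 0 follows by damping with the powers of I - P/K, using only that
   the product of commuting positive operators is positive (Riesz and Sz.-Nagy). *)

theory Submission
  imports Defs
begin

section \<open>The space l2(D)\<close>

lemma l2_add [intro]:
  assumes "x \<in> l2 D" "y \<in> l2 D"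
  shows "(\<lambda>k. x k + y k) \<in> l2 D"
proof -
  have "(cmod (x k + y k))\<^sup>2 \<le> 2 * (cmod (x k))\<^sup>2 + 2 * (cmod (y k))\<^sup>2" for k
  proof -
    have "(cmod (x k + y k))\<^sup>2 \<le> (cmod (x k) + cmod (y k))\<^sup>2"
      by (simp add: norm_triangle_ineq power_mono)
    also have "\<dots> \<le> 2 * (cmod (x k))\<^sup>2 + 2 * (cmod (y k))\<^sup>2"
      using sum_squares_bound[of "cmod (x k)" "cmod (y k)"] by (simp add: power2_sum)
    finally show ?thesis .
  qed
  moreover have "(\<lambda>k. 2 * (cmod (x k))\<^sup>2 + 2 * (cmod (y k))\<^sup>2) summable_on D"
    using assms unfolding l2_def by (auto intro!: summable_on_add summable_on_cmult_right)
  ultimately have "(\<lambda>k. (cmod (x k + y k))\<^sup>2) summable_on D"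
    by (auto intro: summable_on_comparison_test)
  with assms show ?thesis
    unfolding l2_def by simp
qed

lemma l2_scale [intro]: "x \<in> l2 D \<Longrightarrow> (\<lambda>k. c * x k) \<in> l2 D"
  unfolding l2_def by (auto simp: norm_mult power_mult_distrib intro!: summable_on_cmult_right)

lemma l2_diff [intro]:
  assumes "x \<in> l2 D" "y \<in> l2 D"
  shows "(\<lambda>k. x k - y k) \<in> l2 D"
  using l2_add[OF assms(1) l2_scale[OF assms(2), of "-1"]] by simp

lemma basis_vec_in_l2: "k \<in> D \<Longrightarrow> basis_vec k \<in> l2 D"
  unfolding l2_def basis_vec_def
  by (auto intro!: finite_nonzero_values_imp_summable_on intro: finite_subset[of _ "{k}"])

lemma l2norm_basis_vec: "k \<in> D \<Longrightarrow> l2norm D (basis_vec k) = 1"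
proof -
  assume "k \<in> D"
  then have "(\<Sum>\<^sub>\<infinity>j\<in>D. (cmod (basis_vec k j))\<^sup>2) = (\<Sum>\<^sub>\<infinity>j\<in>{k}. (cmod (basis_vec k j))\<^sup>2)"
    by (intro infsum_cong_neutral) (auto simp: basis_vec_def)
  then show ?thesis
    by (simp add: l2norm_def basis_vec_def)
qed

lemma l2norm_nonneg: "0 \<le> l2norm D x"
  unfolding l2norm_def by (simp add: infsum_nonneg)

lemma cinner_summable:
  assumes "x \<in> l2 D" "y \<in> l2 D"
  shows "(\<lambda>k. cnj (x k) * y k) summable_on D"
proof -
  have bound: "cmod (cnj (x k) * y k) \<le> (cmod (x k))\<^sup>2 + (cmod (y k))\<^sup>2" for k
  proof -
    have "cmod (cnj (x k) * y k) = cmod (x k) * cmod (y k)"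
      by (simp add: norm_mult)
    moreover have "0 \<le> cmod (x k) * cmod (y k)"
      by simp
    ultimately show ?thesis
      using sum_squares_bound[of "cmod (x k)" "cmod (y k)"] by linarith
  qed
  have "(\<lambda>k. (cmod (x k))\<^sup>2 + (cmod (y k))\<^sup>2) summable_on D"
    using assms unfolding l2_def by (auto intro: summable_on_add)
  from Infinite_Sum.abs_summable_on_comparison_test'[OF this bound] show ?thesis
    by (rule abs_summable_summable)
qed

lemma cinner_commute: "cinner D y x = cnj (cinner D x y)"
  unfolding cinner_def by (simp flip: infsum_cnj add: mult.commute)

lemma cinner_add_right:
  "x \<in> l2 D \<Longrightarrow> y \<in> l2 D \<Longrightarrow> z \<in> l2 D \<Longrightarrow>
   cinner D x (\<lambda>k. y k + z k) = cinner D x y + cinner D x z"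
  unfolding cinner_def by (simp add: distrib_left infsum_add cinner_summable)

lemma cinner_scale_right: "cinner D x (\<lambda>k. c * y k) = c * cinner D x y"
  unfolding cinner_def by (simp add: mult.left_commute infsum_cmult_right')

lemma cinner_diff_right:
  assumes "x \<in> l2 D" "y \<in> l2 D" "z \<in> l2 D"
  shows "cinner D x (\<lambda>k. y k - z k) = cinner D x y - cinner D x z"
  using cinner_add_right[OF assms(1,2) l2_scale[OF assms(3), of "-1"]]
    cinner_scale_right[of D x "-1" z]
  by simp

lemma cinner_add_left:
  "x \<in> l2 D \<Longrightarrow> y \<in> l2 D \<Longrightarrow> z \<in> l2 D \<Longrightarrow>
   cinner D (\<lambda>k. y k + z k) x = cinner D y x + cinner D z x"
  by (subst (1 2 3) cinner_commute) (simp add: cinner_add_right)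

lemma cinner_scale_left: "cinner D (\<lambda>k. c * y k) x = cnj c * cinner D y x"
  by (subst (1 2) cinner_commute) (simp add: cinner_scale_right)

lemma cinner_diff_left:
  "x \<in> l2 D \<Longrightarrow> y \<in> l2 D \<Longrightarrow> z \<in> l2 D \<Longrightarrow>
   cinner D (\<lambda>k. y k - z k) x = cinner D y x - cinner D z x"
  by (subst (1 2 3) cinner_commute) (simp add: cinner_diff_right)

lemma cinner_self:
  assumes "x \<in> l2 D"
  shows "cinner D x x = of_real ((l2norm D x)\<^sup>2)"
proof -
  have "cinner D x x = (\<Sum>\<^sub>\<infinity>k\<in>D. of_real ((cmod (x k))\<^sup>2))"
    unfolding cinner_def by (intro infsum_cong) (metis complex_norm_square mult.commute)
  also have "\<dots> = of_real (\<Sum>\<^sub>\<infinity>k\<in>D. (cmod (x k))\<^sup>2)"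
    using assms unfolding l2_def by (intro infsumI has_sum_of_real has_sum_infsum) simp
  finally show ?thesis
    by (simp add: l2norm_def infsum_nonneg)
qed

lemma cinner_self_eq_zero:
  assumes x: "x \<in> l2 D" and "cinner D x x = 0"
  shows "x = (\<lambda>k. 0)"
proof
  fix k
  have "(\<Sum>\<^sub>\<infinity>k\<in>D. (cmod (x k))\<^sup>2) = 0"
    using assms by (simp add: cinner_self l2norm_def infsum_nonneg)
  then have "(cmod (x k))\<^sup>2 = 0" if "k \<in> D"
    using x that unfolding l2_def by (intro nonneg_infsum_le_0D) auto
  then show "x k = 0"
    using x unfolding l2_def by (cases "k \<in> D") auto
qed

section \<open>Hermitian and positive operators\<close>

type_synonym l2_op = "(nat \<Rightarrow> complex) \<Rightarrow> nat \<Rightarrow> complex"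

text \<open>Unlike bounded_op, these notions do not require boundedness; where it is needed it enters
  as an explicit bound on the quadratic form.\<close>

definition linear_op :: "nat set \<Rightarrow> l2_op \<Rightarrow> bool" where
  "linear_op D T \<longleftrightarrow> (\<forall>x\<in>l2 D. T x \<in> l2 D) \<and>
     (\<forall>x\<in>l2 D. \<forall>y\<in>l2 D. T (\<lambda>k. x k + y k) = (\<lambda>k. T x k + T y k)) \<and>
     (\<forall>x\<in>l2 D. \<forall>c. T (\<lambda>k. c * x k) = (\<lambda>k. c * T x k))"

definition hermitian_op :: "nat set \<Rightarrow> l2_op \<Rightarrow> bool" where
  "hermitian_op D T \<longleftrightarrow> linear_op D T \<and> (\<forall>x\<in>l2 D. \<forall>y\<in>l2 D. cinner D x (T y) = cinner D (T x) y)"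

definition psd_op :: "nat set \<Rightarrow> l2_op \<Rightarrow> bool" where
  "psd_op D T \<longleftrightarrow> hermitian_op D T \<and> (\<forall>x\<in>l2 D. 0 \<le> Re (cinner D x (T x)))"

lemma linear_op_in_l2: "linear_op D T \<Longrightarrow> x \<in> l2 D \<Longrightarrow> T x \<in> l2 D"
  by (simp add: linear_op_def)

lemma linear_op_add:
  "linear_op D T \<Longrightarrow> x \<in> l2 D \<Longrightarrow> y \<in> l2 D \<Longrightarrow> T (\<lambda>k. x k + y k) = (\<lambda>k. T x k + T y k)"
  by (simp add: linear_op_def)

lemma linear_op_scale: "linear_op D T \<Longrightarrow> x \<in> l2 D \<Longrightarrow> T (\<lambda>k. c * x k) = (\<lambda>k. c * T x k)"
  by (simp add: linear_op_def)

lemma linear_op_diff: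
  assumes "linear_op D T" "x \<in> l2 D" "y \<in> l2 D"
  shows "T (\<lambda>k. x k - y k) = (\<lambda>k. T x k - T y k)"
  using linear_op_add[OF assms(1,2) l2_scale[OF assms(3), of "-1"]] linear_op_scale[OF assms(1,3), of "-1"]
  by simp

lemma linear_op_uminus: "linear_op D T \<Longrightarrow> x \<in> l2 D \<Longrightarrow> T (\<lambda>k. - x k) = (\<lambda>k. - T x k)"
  using linear_op_scale[of D T x "-1"] by simp

lemma hermitian_op_linear: "hermitian_op D T \<Longrightarrow> linear_op D T"
  by (simp add: hermitian_op_def)

lemma hermitian_op_in_l2: "hermitian_op D T \<Longrightarrow> x \<in> l2 D \<Longrightarrow> T x \<in> l2 D"
  by (simp add: hermitian_op_def linear_op_def)

lemma hermitian_op_cinner: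
  "hermitian_op D T \<Longrightarrow> x \<in> l2 D \<Longrightarrow> y \<in> l2 D \<Longrightarrow> cinner D x (T y) = cinner D (T x) y"
  by (simp add: hermitian_op_def)

lemma psd_op_hermitian: "psd_op D T \<Longrightarrow> hermitian_op D T"
  by (simp add: psd_op_def)

lemma psd_op_nonneg: "psd_op D T \<Longrightarrow> x \<in> l2 D \<Longrightarrow> 0 \<le> Re (cinner D x (T x))"
  by (simp add: psd_op_def)

lemma hermitian_op_cinner_real:
  assumes "hermitian_op D T" "x \<in> l2 D"
  shows "cinner D x (T x) = of_real (Re (cinner D x (T x)))"
proof -
  have "cinner D x (T x) = cnj (cinner D x (T x))"
    using hermitian_op_cinner[OF assms assms(2)] cinner_commute[of D "T x" x] by (rule trans)
  then have "cinner D x (T x) \<in> \<real>"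
    unfolding Reals_cnj_iff by (rule sym)
  then show ?thesis
    by simp
qed

lemma hermitian_op_id: "hermitian_op D (\<lambda>x. x)"
  by (simp add: hermitian_op_def linear_op_def)

lemma psd_op_id: "psd_op D (\<lambda>x. x)"
  by (simp add: psd_op_def hermitian_op_id cinner_self)

lemma hermitian_op_diff:
  assumes T: "hermitian_op D T" and S: "hermitian_op D S"
  shows "hermitian_op D (\<lambda>x k. T x k - S x k)"
  unfolding hermitian_op_def linear_op_def
proof (intro conjI ballI allI)
  fix x y c
  assume x: "x \<in> l2 D" and y: "y \<in> l2 D"
  have L: "linear_op D T" "linear_op D S"
    using T S by (auto intro: hermitian_op_linear)
  have in_l2: "T v \<in> l2 D" "S v \<in> l2 D" if "v \<in> l2 D" for v
    using T S that by (auto intro: hermitian_op_in_l2)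
  show "(\<lambda>k. T x k - S x k) \<in> l2 D"
    using in_l2[OF x] by (rule l2_diff)
  show "(\<lambda>k. T (\<lambda>k. x k + y k) k - S (\<lambda>k. x k + y k) k) =
      (\<lambda>k. T x k - S x k + (T y k - S y k))"
    using linear_op_add[OF L(1) x y] linear_op_add[OF L(2) x y] by (simp add: algebra_simps)
  show "(\<lambda>k. T (\<lambda>k. c * x k) k - S (\<lambda>k. c * x k) k) = (\<lambda>k. c * (T x k - S x k))"
    using linear_op_scale[OF L(1) x] linear_op_scale[OF L(2) x] by (simp add: right_diff_distrib)
  show "cinner D x (\<lambda>k. T y k - S y k) = cinner D (\<lambda>k. T x k - S x k) y"
    using hermitian_op_cinner[OF T x y] hermitian_op_cinner[OF S x y] in_l2 x y
    by (simp add: cinner_diff_right cinner_diff_left)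
qed

lemma hermitian_op_scale:
  assumes T: "hermitian_op D T"
  shows "hermitian_op D (\<lambda>x k. of_real r * T x k)"
  unfolding hermitian_op_def linear_op_def
proof (intro conjI ballI allI)
  fix x y c
  assume x: "x \<in> l2 D" and y: "y \<in> l2 D"
  have L: "linear_op D T"
    using T by (rule hermitian_op_linear)
  show "(\<lambda>k. of_real r * T x k) \<in> l2 D"
    using hermitian_op_in_l2[OF T x] by (rule l2_scale)
  show "(\<lambda>k. of_real r * T (\<lambda>k. x k + y k) k) = (\<lambda>k. of_real r * T x k + of_real r * T y k)"
    using linear_op_add[OF L x y] by (simp add: distrib_left)
  show "(\<lambda>k. of_real r * T (\<lambda>k. c * x k) k) = (\<lambda>k. c * (of_real r * T x k))"
    using linear_op_scale[OF L x] by (simp add: mult.left_commute)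
  show "cinner D x (\<lambda>k. of_real r * T y k) = cinner D (\<lambda>k. of_real r * T x k) y"
    using hermitian_op_cinner[OF T x y] by (simp add: cinner_scale_right cinner_scale_left)
qed

lemma hermitian_op_comp:
  assumes "hermitian_op D T" "hermitian_op D S" "\<And>x. x \<in> l2 D \<Longrightarrow> T (S x) = S (T x)"
  shows "hermitian_op D (\<lambda>x. T (S x))"
  using assms unfolding hermitian_op_def linear_op_def by auto

lemma hermitian_op_funpow:
  assumes "hermitian_op D G"
  shows "hermitian_op D (G ^^ j)"
proof (induction j)
  case 0
  then show ?case
    using hermitian_op_id by (simp add: id_def)
next
  case (Suc j)
  have "hermitian_op D (\<lambda>x. G ((G ^^ j) x))"
    by (rule hermitian_op_comp[OF assms Suc]) (simp add: funpow_swap1)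
  then show ?case
    by (simp add: comp_def)
qed

lemma commute_funpow:
  assumes G: "hermitian_op D G" and comm: "\<And>v. v \<in> l2 D \<Longrightarrow> B (G v) = G (B v)"
    and v: "v \<in> l2 D"
  shows "B ((G ^^ j) v) = (G ^^ j) (B v)"
proof (induction j)
  case (Suc j)
  have "(G ^^ j) v \<in> l2 D"
    using hermitian_op_in_l2[OF hermitian_op_funpow[OF G] v] .
  with Suc show ?case
    using comm by simp
qed simp

lemma cinner_quadratic_expand:
  assumes T: "linear_op D T" and x: "x \<in> l2 D" and y: "y \<in> l2 D"
  shows "cinner D (\<lambda>k. x k + s * y k) (T (\<lambda>k. x k + s * y k)) =
         cinner D x (T x) + s * cinner D x (T y) + cnj s * (cinner D y (T x) + s * cinner D y (T y))"
proof -
  have Tx: "T x \<in> l2 D" and Ty: "T y \<in> l2 D"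
    using T x y by (auto intro: linear_op_in_l2)
  have w: "(\<lambda>k. T x k + s * T y k) \<in> l2 D"
    using Tx Ty by auto
  have "T (\<lambda>k. x k + s * y k) = (\<lambda>k. T x k + s * T y k)"
    using linear_op_add[OF T x l2_scale[OF y]] linear_op_scale[OF T y] by simp
  then have "cinner D (\<lambda>k. x k + s * y k) (T (\<lambda>k. x k + s * y k)) =
      cinner D x (\<lambda>k. T x k + s * T y k) + cnj s * cinner D y (\<lambda>k. T x k + s * T y k)"
    using cinner_add_left[OF w x l2_scale[OF y]] by (simp add: cinner_scale_left)
  also have "\<dots> = cinner D x (T x) + s * cinner D x (T y) + cnj s * (cinner D y (T x) + s * cinner D y (T y))"
    using x y Tx Ty by (simp add: l2_scale cinner_add_right cinner_scale_right)
  finally show ?thesis .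
qed

lemma quadratic_nonneg_imp_bound:
  fixes p q b :: real
  assumes "0 \<le> q" "0 \<le> b" "\<And>t. 0 \<le> p - 2 * t * b + t\<^sup>2 * b * q"
  shows "b \<le> p * q"
proof (cases "q = 0")
  case True
  show ?thesis
  proof (rule ccontr)
    assume "\<not> b \<le> p * q"
    with True have "b > 0" by simp
    moreover have "0 \<le> p - 2 * ((p + 1) / (2 * b)) * b + ((p + 1) / (2 * b))\<^sup>2 * b * q"
      by (rule assms(3))
    ultimately show False
      using True by (simp add: field_simps)
  qed
next
  case False
  with assms(1) have q: "q > 0" by simp
  have "0 \<le> p - 2 * (1 / q) * b + (1 / q)\<^sup>2 * b * q"
    by (rule assms(3))
  with q show ?thesis
    by (simp add: power2_eq_square field_simps)
qed

lemma psd_op_Cauchy_Schwarz: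
  assumes T: "psd_op D T" and x: "x \<in> l2 D" and y: "y \<in> l2 D"
  shows "(cmod (cinner D x (T y)))\<^sup>2 \<le> Re (cinner D x (T x)) * Re (cinner D y (T y))"
proof (rule quadratic_nonneg_imp_bound)
  let ?a = "cinner D x (T y)"
  have H: "hermitian_op D T"
    using T by (rule psd_op_hermitian)
  show "0 \<le> Re (cinner D x (T x)) - 2 * t * (cmod ?a)\<^sup>2 + t\<^sup>2 * (cmod ?a)\<^sup>2 * Re (cinner D y (T y))"
    for t
  proof -
    let ?s = "- (of_real t * cnj ?a)"
    have "cinner D y (T x) = cnj ?a"
      using hermitian_op_cinner[OF H y x] cinner_commute[of D "T y" x] by (rule trans)
    moreover obtain q where "cinner D y (T y) = of_real q"
      using hermitian_op_cinner_real[OF H y] by blast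
    ultimately have "Re (cinner D (\<lambda>k. x k + ?s * y k) (T (\<lambda>k. x k + ?s * y k))) =
        Re (cinner D x (T x)) - 2 * t * (cmod ?a)\<^sup>2 + t\<^sup>2 * (cmod ?a)\<^sup>2 * Re (cinner D y (T y))"
      unfolding cinner_quadratic_expand[OF hermitian_op_linear[OF H] x y]
      by (simp only:) (simp add: cmod_def power2_eq_square algebra_simps)
    moreover have "0 \<le> Re (cinner D (\<lambda>k. x k + ?s * y k) (T (\<lambda>k. x k + ?s * y k)))"
      by (rule psd_op_nonneg[OF T l2_add[OF x l2_scale[OF y]]])
    ultimately show ?thesis
      by linarith
  qed
qed (use psd_op_nonneg[OF T y] in auto)

lemma psd_op_kernel:
  assumes T: "psd_op D T" and y: "y \<in> l2 D" and "Re (cinner D y (T y)) = 0"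
  shows "T y = (\<lambda>k. 0)"
proof -
  have Ty: "T y \<in> l2 D"
    using hermitian_op_in_l2[OF psd_op_hermitian[OF T] y] .
  have "(cmod (cinner D (T y) (T y)))\<^sup>2 \<le> Re (cinner D (T y) (T (T y))) * Re (cinner D y (T y))"
    by (rule psd_op_Cauchy_Schwarz[OF T Ty y])
  with assms have "cinner D (T y) (T y) = 0"
    by simp
  then show ?thesis
    using cinner_self_eq_zero[OF Ty] by simp
qed

lemma cinner_Cauchy_Schwarz:
  assumes x: "x \<in> l2 D" and y: "y \<in> l2 D"
  shows "cmod (cinner D x y) \<le> l2norm D x * l2norm D y"
proof -
  have "(cmod (cinner D x y))\<^sup>2 \<le> (l2norm D x * l2norm D y)\<^sup>2"
    using psd_op_Cauchy_Schwarz[OF psd_op_id x y] by (simp add: x y cinner_self power_mult_distrib)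
  then show ?thesis
    by (rule power2_le_imp_le) (simp add: l2norm_nonneg)
qed

lemma bounded_op_linear: "bounded_op D T \<Longrightarrow> linear_op D T"
  unfolding bounded_op_def linear_op_def by blast

lemma self_adjoint_op_hermitian: "self_adjoint_op D A \<Longrightarrow> hermitian_op D A"
  unfolding self_adjoint_op_def hermitian_op_def is_adjoint_def using bounded_op_linear by blast

lemma positive_op_psd:
  assumes P: "positive_op D P"
  shows "psd_op D P"
proof -
  have L: "linear_op D P"
    using P unfolding positive_op_def by (blast intro: bounded_op_linear)
  have real: "Im (cinner D z (P z)) = 0" if "z \<in> l2 D" for z
    using P that unfolding positive_op_def by blast
  have "cinner D x (P y) = cinner D (P x) y" if x: "x \<in> l2 D" and y: "y \<in> l2 D" for x y
  proof -
    define a where "a = cinner D x (P y)"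
    define b where "b = cinner D y (P x)"
    \<comment> \<open>polarization: the forms at x + y and x + i y are real\<close>
    have "Im (a + b) = 0"
      using real[OF l2_add[OF x l2_scale[OF y, of 1]]] cinner_quadratic_expand[OF L x y, of 1] real[OF x] real[OF y]
      unfolding a_def b_def by simp
    moreover have "Re (a - b) = 0"
      using real[OF l2_add[OF x l2_scale[OF y, of \<i>]]] cinner_quadratic_expand[OF L x y, of \<i>] real[OF x] real[OF y]
      unfolding a_def b_def by (simp add: algebra_simps)
    ultimately have "b = cnj a"
      by (simp add: complex_eq_iff)
    then show ?thesis
      unfolding a_def b_def by (simp add: cinner_commute[of D "P x" y])
  qed
  with L P show ?thesis
    unfolding psd_op_def hermitian_op_def positive_op_def by blast
qed

lemma positive_op_form_bound:
  assumes P: "positive_op D P"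
  obtains K where "0 < K" "\<And>z. z \<in> l2 D \<Longrightarrow> Re (cinner D z (P z)) \<le> K * Re (cinner D z z)"
proof -
  obtain K0 where K0: "\<And>z. z \<in> l2 D \<Longrightarrow> l2norm D (P z) \<le> K0 * l2norm D z"
    using P unfolding positive_op_def bounded_op_def by blast
  have "Re (cinner D z (P z)) \<le> max K0 1 * Re (cinner D z z)" if z: "z \<in> l2 D" for z
  proof -
    have Pz: "P z \<in> l2 D"
      using P z unfolding positive_op_def bounded_op_def by blast
    have "Re (cinner D z (P z)) \<le> l2norm D z * l2norm D (P z)"
      using complex_Re_le_cmod[of "cinner D z (P z)"] cinner_Cauchy_Schwarz[OF z Pz] by linarith
    also have "\<dots> \<le> l2norm D z * (max K0 1 * l2norm D z)"
      using K0[OF z] l2norm_nonneg[of D z]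
      by (intro mult_left_mono) (auto intro: order_trans[OF _ mult_right_mono])
    finally show ?thesis
      by (simp add: z cinner_self power2_eq_square mult_ac)
  qed
  then show ?thesis
    using that[of "max K0 1"] by simp
qed

section \<open>Products of commuting positive operators\<close>

text \<open>For 0 \<le> S \<le> I the iteration R_0 = S, R_(n+1) = R_n - R_n^2 stays between 0 and I and
  telescopes to S = R_0^2 + ... + R_(n-1)^2 + R_n, so that B S = \<Sum>_(j<n) R_j B R_j + B R_n for every B
  commuting with S (Riesz and Sz.-Nagy). Since \<Sum>_j |R_j x|^2 \<le> <x, S x>, the remainder B R_n x
  tends to 0; this replaces the square root of S in the usual proof that B S \<ge> 0.\<close>

primrec sub_square_iter :: "l2_op \<Rightarrow> nat \<Rightarrow> l2_op" where
  "sub_square_iter S 0 = S"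
| "sub_square_iter S (Suc n) = (\<lambda>x k. sub_square_iter S n x k - sub_square_iter S n (sub_square_iter S n x) k)"

lemma sub_square_iter_hermitian:
  assumes "hermitian_op D S"
  shows "hermitian_op D (sub_square_iter S n)"
proof (induction n)
  case (Suc n)
  then show ?case
    using hermitian_op_diff[OF Suc hermitian_op_comp[OF Suc Suc]] by simp
qed (simp add: assms)

lemma sub_square_iter_commute:
  assumes S: "hermitian_op D S" and B: "linear_op D B"
    and comm: "\<And>x. x \<in> l2 D \<Longrightarrow> B (S x) = S (B x)" and x: "x \<in> l2 D"
  shows "B (sub_square_iter S n x) = sub_square_iter S n (B x)"
  using x
proof (induction n arbitrary: x)
  case (Suc n)
  let ?R = "sub_square_iter S n"
  have "?R x \<in> l2 D" "?R (?R x) \<in> l2 D"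
    using Suc.prems sub_square_iter_hermitian[OF S] by (auto intro: hermitian_op_in_l2)
  with Suc show ?case
    using linear_op_diff[OF B] by simp
qed (simp add: comm)

lemma op_square_le_self:
  assumes R: "hermitian_op D R" and z: "z \<in> l2 D"
    and bounds: "\<And>v. v \<in> l2 D \<Longrightarrow> 0 \<le> Re (cinner D v (R v)) \<and> Re (cinner D v (R v)) \<le> Re (cinner D v v)"
  shows "Re (cinner D (R z) (R z)) \<le> Re (cinner D z (R z))"
proof -
  define y where "y = R z"
  have y: "y \<in> l2 D" and Ry: "R y \<in> l2 D"
    unfolding y_def using R z by (auto intro: hermitian_op_in_l2)
  define w where "w = (\<lambda>k. z k - y k)"
  have w: "w \<in> l2 D"
    unfolding w_def using z y by (rule l2_diff)
  have "cinner D z (R y) = cinner D y y"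
    unfolding y_def using hermitian_op_cinner[OF R z] R z by (auto intro: hermitian_op_in_l2)
  moreover have "R w = (\<lambda>k. R z k - R y k)"
    unfolding w_def using linear_op_diff[OF hermitian_op_linear[OF R] z y] .
  ultimately have "cinner D w (R w) = cinner D z y - 2 * cinner D y y + cinner D y (R y)"
    unfolding w_def using z y Ry by (simp add: y_def[symmetric] l2_diff cinner_diff_left cinner_diff_right)
  with bounds[OF w] bounds[OF y] show ?thesis
    unfolding y_def by simp
qed

lemma sub_square_iter_bounds:
  assumes S: "hermitian_op D S"
    and bounds: "\<And>z. z \<in> l2 D \<Longrightarrow> 0 \<le> Re (cinner D z (S z)) \<and> Re (cinner D z (S z)) \<le> Re (cinner D z z)"
    and z: "z \<in> l2 D"
  shows "0 \<le> Re (cinner D z (sub_square_iter S n z)) \<and> Re (cinner D z (sub_square_iter S n z)) \<le> Re (cinner D z z)"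
  using z
proof (induction n arbitrary: z)
  case (Suc n)
  let ?R = "sub_square_iter S n"
  have R: "hermitian_op D ?R"
    using S by (rule sub_square_iter_hermitian)
  have Rz: "?R z \<in> l2 D" "?R (?R z) \<in> l2 D"
    using R Suc.prems by (auto intro: hermitian_op_in_l2)
  have "cinner D z (sub_square_iter S (Suc n) z) = cinner D z (?R z) - cinner D (?R z) (?R z)"
    using cinner_diff_right[OF Suc.prems Rz] hermitian_op_cinner[OF R Suc.prems Rz(1)] by simp
  moreover have "Re (cinner D (?R z) (?R z)) \<le> Re (cinner D z (?R z))"
    using op_square_le_self[OF R Suc.prems] Suc.IH by blast
  moreover have "0 \<le> Re (cinner D (?R z) (?R z))"
    using Rz by (simp add: cinner_self)
  ultimately show ?case
    using Suc.IH[OF Suc.prems] by simp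
qed (use bounds in simp)

lemma sub_square_iter_telescope:
  assumes S: "hermitian_op D S" and B: "hermitian_op D B"
    and comm: "\<And>x. x \<in> l2 D \<Longrightarrow> B (S x) = S (B x)" and x: "x \<in> l2 D"
  shows "cinner D x (B (S x)) =
    (\<Sum>j<n. cinner D (sub_square_iter S j x) (B (sub_square_iter S j x))) + cinner D x (B (sub_square_iter S n x))"
proof (induction n)
  case (Suc n)
  let ?R = "sub_square_iter S n"
  have R: "hermitian_op D ?R"
    using S by (rule sub_square_iter_hermitian)
  have in_l2: "?R x \<in> l2 D" "B (?R x) \<in> l2 D" "B (?R (?R x)) \<in> l2 D"
    using R B x by (auto intro: hermitian_op_in_l2)
  have "B (?R (?R x)) = ?R (B (?R x))"
    using sub_square_iter_commute[OF S hermitian_op_linear[OF B] comm in_l2(1)] .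
  then have "cinner D x (B (?R (?R x))) = cinner D (?R x) (B (?R x))"
    using hermitian_op_cinner[OF R x in_l2(2)] by simp
  moreover have "B (sub_square_iter S (Suc n) x) = (\<lambda>k. B (?R x) k - B (?R (?R x)) k)"
    using linear_op_diff[OF hermitian_op_linear[OF B] in_l2(1)] R x by (simp add: hermitian_op_in_l2)
  ultimately show ?case
    using Suc cinner_diff_right[OF x in_l2(2,3)] by simp
qed simp

lemma psd_op_commuting_product_unit:
  assumes S: "psd_op D S" and S_le: "\<And>z. z \<in> l2 D \<Longrightarrow> Re (cinner D z (S z)) \<le> Re (cinner D z z)"
    and B: "psd_op D B" and comm: "\<And>x. x \<in> l2 D \<Longrightarrow> B (S x) = S (B x)"
    and x: "x \<in> l2 D"
  shows "0 \<le> Re (cinner D x (B (S x)))"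
proof -
  let ?R = "sub_square_iter S"
  have SH: "hermitian_op D S" and BH: "hermitian_op D B"
    using S B by (auto intro: psd_op_hermitian)
  have bounds: "0 \<le> Re (cinner D z (?R n z)) \<and> Re (cinner D z (?R n z)) \<le> Re (cinner D z z)"
    if "z \<in> l2 D" for z n
    using sub_square_iter_bounds[OF SH _ that] psd_op_nonneg[OF S] S_le by blast
  have Rx: "?R n x \<in> l2 D" for n
    using sub_square_iter_hermitian[OF SH] x by (rule hermitian_op_in_l2)
  have norm_sq: "Re (cinner D (?R j x) (?R j x)) = (l2norm D (?R j x))\<^sup>2" for j
    using Rx by (simp add: cinner_self)
  have "summable (\<lambda>j. (l2norm D (?R j x))\<^sup>2)"
  proof (rule summableI_nonneg_bounded)
    fix n
    have "Re (cinner D x (S x)) = (\<Sum>j<n. Re (cinner D (?R j x) (?R j x))) + Re (cinner D x (?R n x))"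
      using sub_square_iter_telescope[OF SH hermitian_op_id _ x, of n] by simp
    then show "(\<Sum>j<n. (l2norm D (?R j x))\<^sup>2) \<le> Re (cinner D x (S x))"
      using bounds[OF x, of n] norm_sq by simp
  qed simp
  then have "(\<lambda>j. sqrt ((l2norm D (?R j x))\<^sup>2)) \<longlonglongrightarrow> sqrt 0"
    by (intro tendsto_real_sqrt summable_LIMSEQ_zero)
  then have lim: "(\<lambda>j. - (l2norm D (B x) * l2norm D (?R j x))) \<longlonglongrightarrow> - (l2norm D (B x) * 0)"
    using l2norm_nonneg by (intro tendsto_intros) simp
  have bound: "- (l2norm D (B x) * l2norm D (?R n x)) \<le> Re (cinner D x (B (S x)))" for n
  proof -
    have "Re (cinner D x (B (S x))) = (\<Sum>j<n. Re (cinner D (?R j x) (B (?R j x)))) + Re (cinner D (B x) (?R n x))"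
      using sub_square_iter_telescope[OF SH BH comm x, of n] hermitian_op_cinner[OF BH x Rx] by simp
    moreover have "0 \<le> (\<Sum>j<n. Re (cinner D (?R j x) (B (?R j x))))"
      using psd_op_nonneg[OF B Rx] by (simp add: sum_nonneg)
    moreover have "- (l2norm D (B x) * l2norm D (?R n x)) \<le> Re (cinner D (B x) (?R n x))"
      using cinner_Cauchy_Schwarz[OF hermitian_op_in_l2[OF BH x] Rx[of n]] abs_Re_le_cmod[of "cinner D (B x) (?R n x)"]
      by linarith
    ultimately show ?thesis
      by linarith
  qed
  have "- (l2norm D (B x) * 0) \<le> Re (cinner D x (B (S x)))"
    by (intro LIMSEQ_le_const2[OF lim] exI allI impI bound)
  then show ?thesis
    by simp
qed

lemma psd_op_commuting_product:
  assumes T: "psd_op D T" and K: "0 < K"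
    and T_le: "\<And>z. z \<in> l2 D \<Longrightarrow> Re (cinner D z (T z)) \<le> K * Re (cinner D z z)"
    and B: "psd_op D B" and comm: "\<And>x. x \<in> l2 D \<Longrightarrow> B (T x) = T (B x)"
    and x: "x \<in> l2 D"
  shows "0 \<le> Re (cinner D x (B (T x)))"
proof -
  define S where "S = (\<lambda>x k. of_real (1 / K) * T x k)"
  have TH: "hermitian_op D T" and BL: "linear_op D B"
    using T B by (auto intro: psd_op_hermitian hermitian_op_linear)
  have BS: "B (S v) = (\<lambda>k. of_real (1 / K) * B (T v) k)" if "v \<in> l2 D" for v
    unfolding S_def using linear_op_scale[OF BL hermitian_op_in_l2[OF TH that]] .
  have S_form: "Re (cinner D z (S z)) = Re (cinner D z (T z)) / K" for z
    unfolding S_def cinner_scale_right by simp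
  have "hermitian_op D S"
    unfolding S_def by (rule hermitian_op_scale[OF TH])
  then have S: "psd_op D S"
    unfolding psd_op_def S_form using psd_op_nonneg[OF T] K by simp
  have S_le: "Re (cinner D z (S z)) \<le> Re (cinner D z z)" if "z \<in> l2 D" for z
    using T_le[OF that] K unfolding S_form by (simp add: field_simps)
  have S_comm: "B (S v) = S (B v)" if "v \<in> l2 D" for v
    using BS[OF that] comm[OF that] unfolding S_def by simp
  have "0 \<le> Re (cinner D x (B (S x)))"
    by (rule psd_op_commuting_product_unit[OF S S_le B S_comm x])
  moreover have "Re (cinner D x (B (S x))) = Re (cinner D x (B (T x))) / K"
    unfolding BS[OF x] cinner_scale_right by simp
  ultimately show ?thesis
    using K by (simp add: zero_le_divide_iff)
qed

lemma psd_op_funpow: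
  assumes G: "psd_op D G" and G_le: "\<And>z. z \<in> l2 D \<Longrightarrow> Re (cinner D z (G z)) \<le> Re (cinner D z z)"
  shows "psd_op D (G ^^ j)"
proof (induction j)
  case 0
  then show ?case
    using psd_op_id by (simp add: id_def)
next
  case (Suc j)
  have GH: "hermitian_op D G"
    using G by (rule psd_op_hermitian)
  have "0 \<le> Re (cinner D z ((G ^^ Suc j) z))" if z: "z \<in> l2 D" for z
  proof -
    have "0 \<le> Re (cinner D z ((G ^^ j) (G z)))"
      by (rule psd_op_commuting_product[OF G zero_less_one _ Suc _ z])
        (use G_le commute_funpow[OF GH] in simp_all)
    then show ?thesis
      using commute_funpow[OF GH _ z, of G j] by simp
  qed
  then show ?case
    using hermitian_op_funpow[OF GH] unfolding psd_op_def by blast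
qed

lemma psd_op_funpow_antimono:
  assumes G: "psd_op D G" and G_le: "\<And>z. z \<in> l2 D \<Longrightarrow> Re (cinner D z (G z)) \<le> Re (cinner D z z)"
    and z: "z \<in> l2 D"
  shows "Re (cinner D z ((G ^^ Suc j) z)) \<le> Re (cinner D z ((G ^^ j) z))"
proof -
  let ?T = "\<lambda>v k. v k - G v k"
  have GH: "hermitian_op D G"
    using G by (rule psd_op_hermitian)
  have Gj: "hermitian_op D (G ^^ j)"
    using GH by (rule hermitian_op_funpow)
  have T_form: "cinner D v (?T v) = cinner D v v - cinner D v (G v)" if "v \<in> l2 D" for v
    using cinner_diff_right[OF that that hermitian_op_in_l2[OF GH that]] .
  have "psd_op D ?T"
    unfolding psd_op_def using hermitian_op_diff[OF hermitian_op_id GH] G_le by (simp add: T_form)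
  moreover have "Re (cinner D v (?T v)) \<le> 1 * Re (cinner D v v)" if "v \<in> l2 D" for v
    using psd_op_nonneg[OF G that] by (simp add: T_form[OF that])
  moreover have "(G ^^ j) (?T v) = ?T ((G ^^ j) v)" if "v \<in> l2 D" for v
    using linear_op_diff[OF hermitian_op_linear[OF Gj] that hermitian_op_in_l2[OF GH that]]
      commute_funpow[OF GH _ that, of G j] by simp
  ultimately have "0 \<le> Re (cinner D z ((G ^^ j) (?T z)))"
    using psd_op_commuting_product[OF _ zero_less_one _ psd_op_funpow[OF G G_le] _ z] by blast
  moreover have "cinner D z ((G ^^ j) (?T z)) = cinner D z ((G ^^ j) z) - cinner D z ((G ^^ Suc j) z)"
    using linear_op_diff[OF hermitian_op_linear[OF Gj] z hermitian_op_in_l2[OF GH z]]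
      cinner_diff_right[OF z hermitian_op_in_l2[OF Gj z] hermitian_op_in_l2[OF Gj hermitian_op_in_l2[OF GH z]]]
      commute_funpow[OF GH _ z, of G j]
    by simp
  ultimately show ?thesis
    by simp
qed

lemma psd_op_funpow_le_id:
  assumes G: "psd_op D G" and G_le: "\<And>z. z \<in> l2 D \<Longrightarrow> Re (cinner D z (G z)) \<le> Re (cinner D z z)"
    and z: "z \<in> l2 D"
  shows "Re (cinner D z ((G ^^ j) z)) \<le> Re (cinner D z z)"
proof (induction j)
  case (Suc j)
  then show ?case
    using psd_op_funpow_antimono[OF G G_le z, of j] by simp
qed simp

section \<open>A positive square root of A^2 dominates A\<close>

definition op_commutator :: "l2_op \<Rightarrow> l2_op \<Rightarrow> l2_op" where
  "op_commutator S T v = (\<lambda>k. S (T v) k - T (S v) k)"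

lemma op_commutator_in_l2:
  assumes S: "linear_op D S" and T: "linear_op D T" and v: "v \<in> l2 D"
  shows "op_commutator S T v \<in> l2 D"
  unfolding op_commutator_def
  using l2_diff[OF linear_op_in_l2[OF S linear_op_in_l2[OF T v]] linear_op_in_l2[OF T linear_op_in_l2[OF S v]]] .

lemma op_commutator_eq_0_iff: "op_commutator S T v = (\<lambda>k. 0) \<longleftrightarrow> S (T v) = T (S v)"
  unfolding op_commutator_def by (auto simp: fun_eq_iff)

lemma linear_op_commutator:
  assumes S: "linear_op D S" and T: "linear_op D T"
  shows "linear_op D (op_commutator S T)"
  unfolding linear_op_def
proof (intro conjI ballI allI)
  fix x y c
  assume x: "x \<in> l2 D" and y: "y \<in> l2 D"
  have in_l2: "S v \<in> l2 D" "T v \<in> l2 D" if "v \<in> l2 D" for v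
    using S T that by (auto intro: linear_op_in_l2)
  show "op_commutator S T x \<in> l2 D"
    using S T x by (rule op_commutator_in_l2)
  have "S (T (\<lambda>k. x k + y k)) = (\<lambda>k. S (T x) k + S (T y) k)"
    using linear_op_add[OF T x y] linear_op_add[OF S in_l2(2)[OF x] in_l2(2)[OF y]] by simp
  moreover have "T (S (\<lambda>k. x k + y k)) = (\<lambda>k. T (S x) k + T (S y) k)"
    using linear_op_add[OF S x y] linear_op_add[OF T in_l2(1)[OF x] in_l2(1)[OF y]] by simp
  ultimately show "op_commutator S T (\<lambda>k. x k + y k) = (\<lambda>k. op_commutator S T x k + op_commutator S T y k)"
    unfolding op_commutator_def by (simp add: algebra_simps)
  have "S (T (\<lambda>k. c * x k)) = (\<lambda>k. c * S (T x) k)" "T (S (\<lambda>k. c * x k)) = (\<lambda>k. c * T (S x) k)"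
    using linear_op_scale[OF T x] linear_op_scale[OF S in_l2(2)[OF x]]
      linear_op_scale[OF S x] linear_op_scale[OF T in_l2(1)[OF x]] by simp_all
  then show "op_commutator S T (\<lambda>k. c * x k) = (\<lambda>k. c * op_commutator S T x k)"
    unfolding op_commutator_def by (simp add: right_diff_distrib)
qed

lemma op_commutator_skew:
  assumes S: "hermitian_op D S" and T: "hermitian_op D T" and u: "u \<in> l2 D" and v: "v \<in> l2 D"
  shows "cinner D u (op_commutator S T v) = - cinner D (op_commutator S T u) v"
proof -
  have in_l2: "S w \<in> l2 D" "T w \<in> l2 D" if "w \<in> l2 D" for w
    using S T that by (auto intro: hermitian_op_in_l2)
  have "cinner D u (S (T v)) = cinner D (T (S u)) v"
    using hermitian_op_cinner[OF S u in_l2(2)[OF v]] hermitian_op_cinner[OF T in_l2(1)[OF u] v] by (rule trans)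
  moreover have "cinner D u (T (S v)) = cinner D (S (T u)) v"
    using hermitian_op_cinner[OF T u in_l2(1)[OF v]] hermitian_op_cinner[OF S in_l2(2)[OF u] v] by (rule trans)
  ultimately show ?thesis
    unfolding op_commutator_def
    using cinner_diff_right[OF u in_l2(1)[OF in_l2(2)[OF v]] in_l2(2)[OF in_l2(1)[OF v]]]
      cinner_diff_left[OF v in_l2(1)[OF in_l2(2)[OF u]] in_l2(2)[OF in_l2(1)[OF u]]]
    by simp
qed

lemma cinner_neg_commutator_square:
  assumes S: "hermitian_op D S" and T: "hermitian_op D T" and u: "u \<in> l2 D" and v: "v \<in> l2 D"
  shows "cinner D u (\<lambda>k. - op_commutator S T (op_commutator S T v) k) =
    cinner D (op_commutator S T u) (op_commutator S T v)"
proof -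
  have "op_commutator S T v \<in> l2 D"
    using S T v by (intro op_commutator_in_l2 hermitian_op_linear)
  then show ?thesis
    using cinner_scale_right[of D u "-1"] op_commutator_skew[OF S T u] by simp
qed

lemma psd_op_neg_commutator_square:
  assumes S: "hermitian_op D S" and T: "hermitian_op D T"
  shows "psd_op D (\<lambda>v k. - op_commutator S T (op_commutator S T v) k)"
proof -
  let ?X = "op_commutator S T"
  have X: "linear_op D ?X"
    using S T by (intro linear_op_commutator hermitian_op_linear)
  have X_l2: "?X v \<in> l2 D" if "v \<in> l2 D" for v
    using X that by (rule linear_op_in_l2)
  note form = cinner_neg_commutator_square[OF S T]
  have "linear_op D (\<lambda>v k. - ?X (?X v) k)"
    unfolding linear_op_def
  proof (intro conjI ballI allI)
    fix x y c
    assume x: "x \<in> l2 D" and y: "y \<in> l2 D"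
    show "(\<lambda>k. - ?X (?X x) k) \<in> l2 D"
      using l2_scale[OF X_l2[OF X_l2[OF x]], of "-1"] by simp
    show "(\<lambda>k. - ?X (?X (\<lambda>k. x k + y k)) k) = (\<lambda>k. - ?X (?X x) k + - ?X (?X y) k)"
      using linear_op_add[OF X x y] linear_op_add[OF X X_l2[OF x] X_l2[OF y]] by simp
    show "(\<lambda>k. - ?X (?X (\<lambda>k. c * x k)) k) = (\<lambda>k. c * - ?X (?X x) k)"
      using linear_op_scale[OF X x] linear_op_scale[OF X X_l2[OF x]] by simp
  qed
  moreover have "cinner D u (\<lambda>k. - ?X (?X v) k) = cinner D (\<lambda>k. - ?X (?X u) k) v"
    if "u \<in> l2 D" "v \<in> l2 D" for u v
    using form[OF that] form[OF that(2,1)] cinner_commute[of D "\<lambda>k. - ?X (?X u) k" v]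
      cinner_commute[of D "?X u" "?X v"] by simp
  moreover have "0 \<le> Re (cinner D v (\<lambda>k. - ?X (?X v) k))" if "v \<in> l2 D" for v
    using form[OF that that] X_l2[OF that] by (simp add: cinner_self)
  ultimately show ?thesis
    unfolding psd_op_def hermitian_op_def by blast
qed

text \<open>P plays the role of |A|; the form bound K is all that is used of its boundedness.\<close>

locale sqrt_of_square =
  fixes D :: "nat set" and A P :: l2_op and K :: real
  assumes A_hermitian: "hermitian_op D A"
    and P_psd: "psd_op D P"
    and K_pos: "0 < K"
    and P_le: "\<And>z. z \<in> l2 D \<Longrightarrow> Re (cinner D z (P z)) \<le> K * Re (cinner D z z)"
    and P_square: "\<And>x. x \<in> l2 D \<Longrightarrow> P (P x) = A (A x)"
begin

lemma P_hermitian: "hermitian_op D P"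
  using P_psd by (rule psd_op_hermitian)

lemma A_in_l2: "x \<in> l2 D \<Longrightarrow> A x \<in> l2 D"
  using A_hermitian by (rule hermitian_op_in_l2)

lemma P_in_l2: "x \<in> l2 D \<Longrightarrow> P x \<in> l2 D"
  using P_hermitian by (rule hermitian_op_in_l2)

lemma commutator_in_l2: "x \<in> l2 D \<Longrightarrow> op_commutator P A x \<in> l2 D"
  using P_hermitian A_hermitian by (intro op_commutator_in_l2 hermitian_op_linear)

lemma P_anticommutes_commutator:
  assumes w: "w \<in> l2 D"
  shows "P (op_commutator P A w) = (\<lambda>k. - op_commutator P A (P w) k)"
  unfolding op_commutator_def
  using linear_op_diff[OF hermitian_op_linear[OF P_hermitian] P_in_l2[OF A_in_l2[OF w]] A_in_l2[OF P_in_l2[OF w]]]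
    P_square[OF A_in_l2[OF w]] P_square[OF w]
  by simp

text \<open>With X = PA - AP: -X^2 is positive and commutes with P, while PX = -XP turns
  <v, -X^2 P v> into -<Xv, P X v>. So <Xv, P X v> = 0, i.e. P X = 0.\<close>

lemma P_kills_commutator:
  assumes v: "v \<in> l2 D"
  shows "P (op_commutator P A v) = (\<lambda>k. 0)"
proof -
  let ?X = "op_commutator P A"
  let ?Y = "\<lambda>v k. - ?X (?X v) k"
  have X: "linear_op D ?X"
    using P_hermitian A_hermitian by (intro linear_op_commutator hermitian_op_linear)
  have "?X (P w) = (\<lambda>k. - P (?X w) k)" if "w \<in> l2 D" for w
    using P_anticommutes_commutator[OF that] by simp
  then have "?X (?X (P w)) = P (?X (?X w))" if "w \<in> l2 D" for w
    using that P_anticommutes_commutator[OF commutator_in_l2[OF that]]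
      linear_op_uminus[OF X P_in_l2[OF commutator_in_l2[OF that]]] by simp
  then have Y_comm: "?Y (P w) = P (?Y w)" if "w \<in> l2 D" for w
    using that linear_op_uminus[OF hermitian_op_linear[OF P_hermitian] commutator_in_l2[OF commutator_in_l2[OF that]]]
    by simp
  have "0 \<le> Re (cinner D v (?Y (P v)))"
    using psd_op_commuting_product[OF P_psd K_pos P_le psd_op_neg_commutator_square[OF P_hermitian A_hermitian]
        Y_comm v] .
  also have "cinner D v (?Y (P v)) = - cinner D (?X v) (P (?X v))"
    using cinner_neg_commutator_square[OF P_hermitian A_hermitian v P_in_l2[OF v]]
      P_anticommutes_commutator[OF v] cinner_scale_right[of D "?X v" "-1" "P (?X v)"] by simp
  finally have "Re (cinner D (?X v) (P (?X v))) = 0"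
    using psd_op_nonneg[OF P_psd commutator_in_l2[OF v]] by simp
  then show ?thesis
    using psd_op_kernel[OF P_psd commutator_in_l2[OF v]] by simp
qed

lemma P_A_commute:
  assumes x: "x \<in> l2 D"
  shows "P (A x) = A (P x)"
proof -
  let ?X = "op_commutator P A"
  have LA: "linear_op D A" and LP: "linear_op D P"
    using A_hermitian P_hermitian by (auto intro: hermitian_op_linear)
  have XP: "P (A (P w)) = A (P (P w))" if "w \<in> l2 D" for w
    using P_anticommutes_commutator[OF that] P_kills_commutator[OF that] op_commutator_eq_0_iff
    by (metis (no_types, lifting) neg_equal_0_iff_equal)
  have "P (A (P (A x))) = P (P (P (P x)))"
    using XP[OF A_in_l2[OF x]] P_square[OF A_in_l2[OF x]] P_square[OF P_in_l2[OF P_in_l2[OF x]]] P_square[OF x]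
    by simp
  moreover have "P (A (A (P x))) = P (P (P (P x)))"
    using P_square[OF P_in_l2[OF x]] by simp
  ultimately have PAX: "P (A (?X x)) = (\<lambda>k. 0)"
    unfolding op_commutator_def
    using linear_op_diff[OF LA P_in_l2[OF A_in_l2[OF x]] A_in_l2[OF P_in_l2[OF x]]]
      linear_op_diff[OF LP A_in_l2[OF P_in_l2[OF A_in_l2[OF x]]] A_in_l2[OF A_in_l2[OF P_in_l2[OF x]]]]
    by simp
  have "cinner D (?X x) (?X x) = cinner D (?X x) (\<lambda>k. P (A x) k - A (P x) k)"
    by (simp add: op_commutator_def)
  also have "\<dots> = cinner D (?X x) (P (A x)) - cinner D (?X x) (A (P x))"
    using cinner_diff_right[OF commutator_in_l2[OF x] P_in_l2[OF A_in_l2[OF x]] A_in_l2[OF P_in_l2[OF x]]] .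
  also have "cinner D (?X x) (P (A x)) = cinner D (P (?X x)) (A x)"
    using hermitian_op_cinner[OF P_hermitian commutator_in_l2[OF x] A_in_l2[OF x]] .
  also have "cinner D (?X x) (A (P x)) = cinner D (P (A (?X x))) x"
    using hermitian_op_cinner[OF A_hermitian commutator_in_l2[OF x] P_in_l2[OF x]]
      hermitian_op_cinner[OF P_hermitian A_in_l2[OF commutator_in_l2[OF x]] x] by simp
  finally have "cinner D (?X x) (?X x) = 0"
    unfolding P_kills_commutator[OF x] PAX by (simp add: cinner_def)
  then have "?X x = (\<lambda>k. 0)"
    using cinner_self_eq_zero[OF commutator_in_l2[OF x]] by simp
  then show ?thesis
    by (simp add: op_commutator_eq_0_iff)
qed

definition contraction :: l2_op where
  "contraction = (\<lambda>v k. v k - of_real (1 / K) * P v k)"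

lemma contraction_hermitian: "hermitian_op D contraction"
  unfolding contraction_def using hermitian_op_diff[OF hermitian_op_id hermitian_op_scale[OF P_hermitian]] .

lemma contraction_form:
  assumes v: "v \<in> l2 D"
  shows "Re (cinner D v (contraction v)) = Re (cinner D v v) - Re (cinner D v (P v)) / K"
  unfolding contraction_def
  using cinner_diff_right[OF v v l2_scale[OF P_in_l2[OF v], of "of_real (1 / K)"]]
    cinner_scale_right[of D v "of_real (1 / K)"]
  by simp

lemma contraction_psd: "psd_op D contraction"
  unfolding psd_op_def
  using contraction_hermitian P_le K_pos by (simp add: contraction_form field_simps)

lemma contraction_le_id: "v \<in> l2 D \<Longrightarrow> Re (cinner D v (contraction v)) \<le> Re (cinner D v v)"
  using psd_op_nonneg[OF P_psd] K_pos by (simp add: contraction_form)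

lemma contraction_commute:
  assumes B: "linear_op D B" and comm: "\<And>v. v \<in> l2 D \<Longrightarrow> B (P v) = P (B v)" and v: "v \<in> l2 D"
  shows "B (contraction v) = contraction (B v)"
  unfolding contraction_def
  using linear_op_diff[OF B v l2_scale[OF P_in_l2[OF v], of "of_real (1 / K)"]]
    linear_op_scale[OF B P_in_l2[OF v], of "of_real (1 / K)"] comm[OF v]
  by simp

lemma contraction_funpow_hermitian: "hermitian_op D (contraction ^^ j)"
  using contraction_hermitian by (rule hermitian_op_funpow)

lemma contraction_funpow_in_l2: "v \<in> l2 D \<Longrightarrow> (contraction ^^ j) v \<in> l2 D"
  using contraction_funpow_hermitian by (rule hermitian_op_in_l2)

lemma contraction_funpow_psd: "psd_op D (contraction ^^ j)"
  using contraction_psd contraction_le_id by (rule psd_op_funpow)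

lemma contraction_funpow_commute:
  assumes B: "linear_op D B" and comm: "\<And>v. v \<in> l2 D \<Longrightarrow> B (P v) = P (B v)" and v: "v \<in> l2 D"
  shows "B ((contraction ^^ j) v) = (contraction ^^ j) (B v)"
  by (rule commute_funpow[OF contraction_hermitian _ v]) (rule contraction_commute[OF B comm])

lemma contraction_funpow_P_commute: "v \<in> l2 D \<Longrightarrow> P ((contraction ^^ j) v) = (contraction ^^ j) (P v)"
  using contraction_funpow_commute[OF hermitian_op_linear[OF P_hermitian]] by simp

lemma contraction_funpow_Suc:
  assumes v: "v \<in> l2 D"
  shows "(contraction ^^ Suc j) v = (\<lambda>k. (contraction ^^ j) v k - of_real (1 / K) * (contraction ^^ j) (P v) k)"
proof -
  have L: "linear_op D (contraction ^^ j)"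
    using contraction_funpow_hermitian by (rule hermitian_op_linear)
  have "(contraction ^^ Suc j) v = (contraction ^^ j) (contraction v)"
    using contraction_funpow_commute[OF hermitian_op_linear[OF contraction_hermitian] _ v]
      contraction_commute[OF hermitian_op_linear[OF P_hermitian]] by simp
  also have "contraction v = (\<lambda>k. v k - of_real (1 / K) * P v k)"
    by (simp only: contraction_def)
  finally show ?thesis
    using linear_op_diff[OF L v l2_scale[OF P_in_l2[OF v], of "of_real (1 / K)"]]
      linear_op_scale[OF L P_in_l2[OF v], of "of_real (1 / K)"]
    by simp
qed

text \<open>Damping by the powers of C = I - P/K: the forms <x, C^j P x> telescope, so they are
  summable and tend to 0.\<close>

lemma damped_psd: "psd_op D (\<lambda>v. (contraction ^^ j) (P v))"
  unfolding psd_op_def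
proof (intro conjI ballI)
  show "hermitian_op D (\<lambda>v. (contraction ^^ j) (P v))"
    using hermitian_op_comp[OF contraction_funpow_hermitian P_hermitian] contraction_funpow_P_commute by simp
  fix v
  assume v: "v \<in> l2 D"
  show "0 \<le> Re (cinner D v ((contraction ^^ j) (P v)))"
    using psd_op_commuting_product[OF P_psd K_pos P_le contraction_funpow_psd _ v] contraction_funpow_P_commute
    by simp
qed

lemma damped_form:
  assumes v: "v \<in> l2 D"
  shows "Re (cinner D v ((contraction ^^ j) (P v))) =
    K * (Re (cinner D v ((contraction ^^ j) v)) - Re (cinner D v ((contraction ^^ Suc j) v)))"
  unfolding contraction_funpow_Suc[OF v]
  using cinner_diff_right[OF v contraction_funpow_in_l2[OF v]
      l2_scale[OF contraction_funpow_in_l2[OF P_in_l2[OF v]], of "of_real (1 / K)"]]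
    cinner_scale_right[of D v "of_real (1 / K)"] K_pos
  by simp

lemma damped_le: "v \<in> l2 D \<Longrightarrow> Re (cinner D v ((contraction ^^ j) (P v))) \<le> K * Re (cinner D v v)"
  using damped_form psd_op_nonneg[OF contraction_funpow_psd] psd_op_funpow_le_id[OF contraction_psd contraction_le_id]
    K_pos
  by (smt (verit, best) mult_left_mono)

lemma damped_tendsto_zero:
  assumes x: "x \<in> l2 D"
  shows "(\<lambda>j. Re (cinner D x ((contraction ^^ j) (P x)))) \<longlonglongrightarrow> 0"
proof (rule summable_LIMSEQ_zero[OF summableI_nonneg_bounded])
  fix n
  define f where "f j = Re (cinner D x ((contraction ^^ j) x))" for j
  have "(\<Sum>j<n. Re (cinner D x ((contraction ^^ j) (P x)))) = (\<Sum>j<n. K * (f j - f (Suc j)))"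
    unfolding f_def by (rule sum.cong[OF refl damped_form[OF x]])
  also have "\<dots> = K * (Re (cinner D x x) - Re (cinner D x ((contraction ^^ n) x)))"
    unfolding sum_distrib_left[symmetric] sum_lessThan_telescope' by (simp add: f_def)
  finally have "(\<Sum>j<n. Re (cinner D x ((contraction ^^ j) (P x)))) =
      K * (Re (cinner D x x) - Re (cinner D x ((contraction ^^ n) x)))" .
  then show "(\<Sum>j<n. Re (cinner D x ((contraction ^^ j) (P x)))) \<le> K * Re (cinner D x x)"
    using mult_nonneg_nonneg[OF less_imp_le[OF K_pos] psd_op_nonneg[OF contraction_funpow_psd x, of n]]
    by (simp add: algebra_simps)
qed (use psd_op_nonneg[OF damped_psd x] in simp)

text \<open>For the gap U = P - A one has U^2 = 2PU, which bounds |<x, U C^j x>|^4 by a multiple of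
  <x, C^j P x>; as <x, U C^j x> also decreases in j, it cannot start below 0.\<close>

definition gap :: l2_op where
  "gap = (\<lambda>v k. P v k - A v k)"

lemma gap_apply: "gap w = (\<lambda>k. P w k - A w k)"
  by (simp add: gap_def)

lemma gap_hermitian: "hermitian_op D gap"
  unfolding gap_def using P_hermitian A_hermitian by (rule hermitian_op_diff)

lemma gap_in_l2: "v \<in> l2 D \<Longrightarrow> gap v \<in> l2 D"
  using gap_hermitian by (rule hermitian_op_in_l2)

lemma gap_P_commute:
  assumes v: "v \<in> l2 D"
  shows "gap (P v) = P (gap v)"
  unfolding gap_def
  using linear_op_diff[OF hermitian_op_linear[OF P_hermitian] P_in_l2[OF v] A_in_l2[OF v]] P_A_commute[OF v]
  by simp

lemma gap_square:
  assumes v: "v \<in> l2 D"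
  shows "gap (gap v) = (\<lambda>k. 2 * P (gap v) k)"
proof -
  have "A (gap v) = (\<lambda>k. - P (gap v) k)"
    unfolding gap_def
    using linear_op_diff[OF hermitian_op_linear[OF A_hermitian] P_in_l2[OF v] A_in_l2[OF v]]
      linear_op_diff[OF hermitian_op_linear[OF P_hermitian] P_in_l2[OF v] A_in_l2[OF v]]
      P_A_commute[OF v] P_square[OF v]
    by simp
  then show ?thesis
    by (simp add: gap_apply[of "gap v"])
qed

lemma gap_funpow_commute: "v \<in> l2 D \<Longrightarrow> gap ((contraction ^^ j) v) = (contraction ^^ j) (gap v)"
  using contraction_funpow_commute[OF hermitian_op_linear[OF gap_hermitian] gap_P_commute] .

lemma gap_P_psd: "psd_op D (\<lambda>v. gap (P v))"
  unfolding psd_op_def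
proof (intro conjI ballI)
  show "hermitian_op D (\<lambda>v. gap (P v))"
    using gap_hermitian P_hermitian gap_P_commute by (rule hermitian_op_comp)
  fix v
  assume v: "v \<in> l2 D"
  have "cinner D v (gap (gap v)) = 2 * cinner D v (gap (P v))"
    using gap_square[OF v] gap_P_commute[OF v] cinner_scale_right[of D v 2] by simp
  moreover have "cinner D v (gap (gap v)) = cinner D (gap v) (gap v)"
    using hermitian_op_cinner[OF gap_hermitian v gap_in_l2[OF v]] .
  ultimately have "2 * Re (cinner D v (gap (P v))) = Re (cinner D (gap v) (gap v))"
    by simp
  moreover have "0 \<le> Re (cinner D (gap v) (gap v))"
    using gap_in_l2[OF v] by (simp add: cinner_self)
  ultimately show "0 \<le> Re (cinner D v (gap (P v)))"
    by simp
qed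

lemma gap_funpow_antimono:
  assumes x: "x \<in> l2 D"
  shows "Re (cinner D x (gap ((contraction ^^ Suc j) x))) \<le> Re (cinner D x (gap ((contraction ^^ j) x)))"
proof -
  let ?C = "contraction ^^ j"
  have Cx: "?C x \<in> l2 D" and CPx: "?C (P x) \<in> l2 D"
    using x P_in_l2[OF x] by (auto intro: contraction_funpow_in_l2)
  have "0 \<le> Re (cinner D x (gap (P (?C x))))"
    by (rule psd_op_commuting_product[OF contraction_funpow_psd zero_less_one _ gap_P_psd _ x])
      (use psd_op_funpow_le_id[OF contraction_psd contraction_le_id] gap_funpow_commute
          contraction_funpow_P_commute P_in_l2 in simp_all)
  then have pos: "0 \<le> Re (cinner D x (gap (?C (P x))))"
    using contraction_funpow_P_commute[OF x] by simp
  have "gap ((contraction ^^ Suc j) x) = (\<lambda>k. gap (?C x) k - of_real (1 / K) * gap (?C (P x)) k)"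
    unfolding contraction_funpow_Suc[OF x]
    using linear_op_diff[OF hermitian_op_linear[OF gap_hermitian] Cx l2_scale[OF CPx, of "of_real (1 / K)"]]
      linear_op_scale[OF hermitian_op_linear[OF gap_hermitian] CPx, of "of_real (1 / K)"]
    by simp
  then have "cinner D x (gap ((contraction ^^ Suc j) x)) =
      cinner D x (gap (?C x)) - of_real (1 / K) * cinner D x (gap (?C (P x)))"
    using cinner_diff_right[OF x gap_in_l2[OF Cx] l2_scale[OF gap_in_l2[OF CPx], of "of_real (1 / K)"]]
      cinner_scale_right[of D x "of_real (1 / K)" "gap (?C (P x))"]
    by simp
  with pos K_pos show ?thesis
    by simp
qed

lemma gap_funpow_le:
  assumes x: "x \<in> l2 D"
  shows "Re (cinner D x (gap ((contraction ^^ j) x))) \<le> Re (cinner D x (gap x))"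
proof (induction j)
  case (Suc j)
  then show ?case
    using gap_funpow_antimono[OF x, of j] by linarith
qed simp

lemma gap_funpow_estimate:
  assumes x: "x \<in> l2 D"
  shows "(cmod (cinner D x (gap ((contraction ^^ j) x))))^4 \<le>
    4 * (Re (cinner D x x))\<^sup>2 * K * Re (cinner D (gap x) (gap x)) * Re (cinner D x ((contraction ^^ j) (P x)))"
proof -
  let ?C = "contraction ^^ j"
  define \<alpha> where "\<alpha> = cmod (cinner D x (gap (?C x)))"
  define \<beta> where "\<beta> = Re (cinner D (gap x) (?C (gap x)))"
  define \<gamma> where "\<gamma> = cmod (cinner D x (?C (P (gap x))))"
  define N where "N = Re (cinner D x x)"
  have g: "gap x \<in> l2 D"
    using x by (rule gap_in_l2)
  have \<beta>_nonneg: "0 \<le> \<beta>" and N_nonneg: "0 \<le> N"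
    unfolding \<beta>_def N_def using psd_op_nonneg[OF contraction_funpow_psd g] x by (simp_all add: cinner_self)
  have "\<alpha>\<^sup>2 \<le> Re (cinner D x (?C x)) * \<beta>"
    unfolding \<alpha>_def \<beta>_def gap_funpow_commute[OF x] by (rule psd_op_Cauchy_Schwarz[OF contraction_funpow_psd x g])
  also have "\<dots> \<le> N * \<beta>"
    unfolding N_def using psd_op_funpow_le_id[OF contraction_psd contraction_le_id x] \<beta>_nonneg
    by (rule mult_right_mono)
  finally have \<alpha>_le: "\<alpha>\<^sup>2 \<le> N * \<beta>" .
  have "cinner D (gap x) (?C (gap x)) = cinner D x (gap (?C (gap x)))"
    using hermitian_op_cinner[OF gap_hermitian x contraction_funpow_in_l2[OF g]] by simp
  also have "\<dots> = 2 * cinner D x (?C (P (gap x)))"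
    using gap_funpow_commute[OF g] gap_square[OF x]
      linear_op_scale[OF hermitian_op_linear[OF contraction_funpow_hermitian[of j]] P_in_l2[OF g], of 2]
      cinner_scale_right[of D x 2]
    by simp
  finally have \<beta>_le: "\<beta> \<le> 2 * \<gamma>"
    unfolding \<beta>_def \<gamma>_def using complex_Re_le_cmod[of "cinner D x (?C (P (gap x)))"] by simp
  have "\<gamma>\<^sup>2 \<le> Re (cinner D x (?C (P x))) * Re (cinner D (gap x) (?C (P (gap x))))"
    unfolding \<gamma>_def by (rule psd_op_Cauchy_Schwarz[OF damped_psd x g])
  also have "\<dots> \<le> Re (cinner D x (?C (P x))) * (K * Re (cinner D (gap x) (gap x)))"
    using damped_le[OF g] psd_op_nonneg[OF damped_psd x] by (rule mult_left_mono)
  finally have \<gamma>_le: "\<gamma>\<^sup>2 \<le> Re (cinner D x (?C (P x))) * (K * Re (cinner D (gap x) (gap x)))" .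
  have "\<alpha>^4 = (\<alpha>\<^sup>2)\<^sup>2"
    by simp
  also have "\<dots> \<le> (N * (2 * \<gamma>))\<^sup>2"
  proof (rule power_mono)
    show "\<alpha>\<^sup>2 \<le> N * (2 * \<gamma>)"
      using \<alpha>_le mult_left_mono[OF \<beta>_le N_nonneg] by (rule order_trans)
  qed simp
  also have "\<dots> = 4 * N\<^sup>2 * \<gamma>\<^sup>2"
    by (simp add: power_mult_distrib)
  also have "\<dots> \<le> 4 * N\<^sup>2 * (Re (cinner D x (?C (P x))) * (K * Re (cinner D (gap x) (gap x))))"
    using \<gamma>_le by (simp add: mult_left_mono)
  finally show ?thesis
    unfolding \<alpha>_def N_def by (simp add: mult_ac)
qed

lemma gap_nonneg:
  assumes x: "x \<in> l2 D"
  shows "0 \<le> Re (cinner D x (gap x))"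
proof (rule ccontr)
  assume "\<not> 0 \<le> Re (cinner D x (gap x))"
  then have r: "0 < - Re (cinner D x (gap x))"
    by simp
  define c where "c = 4 * (Re (cinner D x x))\<^sup>2 * K * Re (cinner D (gap x) (gap x))"
  have bound: "(- Re (cinner D x (gap x)))^4 \<le> c * Re (cinner D x ((contraction ^^ j) (P x)))" for j
  proof -
    have "- Re (cinner D x (gap x)) \<le> cmod (cinner D x (gap ((contraction ^^ j) x)))"
      using gap_funpow_le[OF x, of j] abs_Re_le_cmod[of "cinner D x (gap ((contraction ^^ j) x))"] by linarith
    then have "(- Re (cinner D x (gap x)))^4 \<le> (cmod (cinner D x (gap ((contraction ^^ j) x))))^4"
      using r by (intro power_mono) simp_all
    then show ?thesis
      unfolding c_def using gap_funpow_estimate[OF x, of j] by linarith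
  qed
  have lim: "(\<lambda>j. c * Re (cinner D x ((contraction ^^ j) (P x)))) \<longlonglongrightarrow> c * 0"
    by (intro tendsto_mult_left damped_tendsto_zero[OF x])
  have "(- Re (cinner D x (gap x)))^4 \<le> c * 0"
    by (intro LIMSEQ_le_const[OF lim] exI allI impI bound)
  then show False
    using zero_less_power[OF r, of 4] by simp
qed

lemma form_le_sqrt:
  assumes x: "x \<in> l2 D"
  shows "Re (cinner D x (A x)) \<le> Re (cinner D x (P x))"
  using gap_nonneg[OF x] cinner_diff_right[OF x P_in_l2[OF x] A_in_l2[OF x]] by (simp add: gap_apply)

end

section \<open>Diagonals and the joint numerical range\<close>

lemma has_sum_sum:
  fixes f :: "'i \<Rightarrow> 'a \<Rightarrow> 'b::topological_comm_monoid_add"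
  assumes "finite I" "\<And>i. i \<in> I \<Longrightarrow> (f i has_sum s i) A"
  shows "((\<lambda>x. \<Sum>i\<in>I. f i x) has_sum (\<Sum>i\<in>I. s i)) A"
  using assms by (induction I rule: finite_induct) (auto intro: has_sum_add)

lemma zero_in_convex_hull_if_has_sum_zero:
  fixes v :: "'a \<Rightarrow> real^'n"
  assumes "S \<noteq> {}" and sums: "\<And>i. ((\<lambda>k. v k $ i) has_sum 0) S"
  shows "0 \<in> convex hull (v ` S)"
proof (rule ccontr)
  assume "0 \<notin> convex hull (v ` S)"
  moreover have "convex hull (v ` S) \<noteq> {}"
    using \<open>S \<noteq> {}\<close> by simp
  ultimately obtain a where a: "a \<in> span (convex hull (v ` S))" "a \<noteq> 0"
    and nonneg: "\<And>x. x \<in> convex hull (v ` S) \<Longrightarrow> 0 \<le> a \<bullet> x"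
    using separating_hyperplane_set_0_inspan[OF convex_convex_hull] by blast
  have "((\<lambda>k. \<Sum>i\<in>UNIV. a $ i * v k $ i) has_sum (\<Sum>i\<in>UNIV. a $ i * 0)) S"
    by (intro has_sum_sum has_sum_cmult_right sums) simp
  then have hs: "((\<lambda>k. a \<bullet> v k) has_sum 0) S"
    by (simp add: inner_vec_def)
  have pos: "0 \<le> a \<bullet> v k" if "k \<in> S" for k
    using nonneg[OF hull_inc[OF imageI[OF that]]] .
  have zero: "a \<bullet> v k = 0" if "k \<in> S" for k
    using nonneg_has_sum_le_0D[OF hs order_refl pos that] .
  have "a \<in> span (v ` S)"
    using a(1) span_minimal[OF convex_hull_subset_span subspace_span] by blast
  then have "orthogonal a a"
    by (rule orthogonal_to_span) (use zero in \<open>auto simp: orthogonal_def\<close>)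
  with a(2) show False
    by (simp add: orthogonal_self)
qed

lemma adjoint_of_hermitian:
  assumes A: "hermitian_op D A" and S: "linear_op D S" and adj: "is_adjoint D A S" and x: "x \<in> l2 D"
  shows "S x = A x"
proof -
  define w where "w = (\<lambda>k. S x k - A x k)"
  have Sx: "S x \<in> l2 D" and Ax: "A x \<in> l2 D"
    using S A x by (auto intro: linear_op_in_l2 hermitian_op_in_l2)
  have w: "w \<in> l2 D"
    unfolding w_def using Sx Ax by (rule l2_diff)
  have "cinner D (S x) w = cinner D (A x) w"
    using adj hermitian_op_cinner[OF A x w] x w unfolding is_adjoint_def by simp
  then have "cinner D w w = 0"
    unfolding w_def using cinner_diff_left[OF w[unfolded w_def] Sx Ax] by simp
  then show ?thesis
    using cinner_self_eq_zero[OF w] unfolding w_def by (simp add: fun_eq_iff)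
qed

lemma hermitian_op_uminus: "hermitian_op D A \<Longrightarrow> hermitian_op D (\<lambda>x k. - A x k)"
  using hermitian_op_scale[of D A "-1"] by simp

text \<open>The positive P in the definition of trace_class is |A|, and -P \<le> A \<le> P bounds the diagonal.\<close>

lemma trace_class_diag_summable:
  assumes A: "hermitian_op D A" and tc: "trace_class D A"
  shows "(\<lambda>k. Re (cinner D (basis_vec k) (A (basis_vec k)))) summable_on D"
proof -
  obtain S P where S: "bounded_op D S" "is_adjoint D A S" and P: "positive_op D P"
    and P_square: "\<And>x. x \<in> l2 D \<Longrightarrow> P (P x) = S (A x)"
    and P_diag: "(\<lambda>k. Re (cinner D (basis_vec k) (P (basis_vec k)))) summable_on D"
    using tc unfolding trace_class_def by blast
  obtain K where K: "0 < K" "\<And>z. z \<in> l2 D \<Longrightarrow> Re (cinner D z (P z)) \<le> K * Re (cinner D z z)"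
    using positive_op_form_bound[OF P] by blast
  have square: "P (P x) = A (A x)" if "x \<in> l2 D" for x
    using P_square[OF that] adjoint_of_hermitian[OF A bounded_op_linear[OF S(1)] S(2)]
      hermitian_op_in_l2[OF A that] by simp
  interpret pos: sqrt_of_square D A P K
    using A positive_op_psd[OF P] K square by unfold_locales
  interpret neg: sqrt_of_square D "\<lambda>x k. - A x k" P K
    using hermitian_op_uminus[OF A] positive_op_psd[OF P] K square
      linear_op_uminus[OF hermitian_op_linear[OF A] hermitian_op_in_l2[OF A]]
    by unfold_locales simp_all
  have "norm (Re (cinner D (basis_vec k) (A (basis_vec k)))) \<le> Re (cinner D (basis_vec k) (P (basis_vec k)))"
    if "k \<in> D" for k
    using pos.form_le_sqrt[OF basis_vec_in_l2[OF that]] neg.form_le_sqrt[OF basis_vec_in_l2[OF that]]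
      cinner_scale_right[of D "basis_vec k" "-1" "A (basis_vec k)"]
    by simp
  from Infinite_Sum.abs_summable_on_comparison_test'[OF P_diag this] show ?thesis
    by (rule abs_summable_summable)
qed

lemma trace_zero_diag_has_sum:
  assumes A: "hermitian_op D A" and tc: "trace_class D A" and tr: "op_trace D A = 0"
  shows "((\<lambda>k. Re (cinner D (basis_vec k) (A (basis_vec k)))) has_sum 0) D"
proof -
  let ?d = "\<lambda>k. Re (cinner D (basis_vec k) (A (basis_vec k)))"
  have summ: "?d summable_on D"
    using A tc by (rule trace_class_diag_summable)
  have "op_trace D A = (\<Sum>\<^sub>\<infinity>k\<in>D. complex_of_real (?d k))"
    unfolding op_trace_def
    using hermitian_op_cinner_real[OF A basis_vec_in_l2] by (intro infsum_cong) auto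
  also have "\<dots> = complex_of_real (infsum ?d D)"
    by (intro infsumI has_sum_of_real has_sum_infsum summ)
  finally have "infsum ?d D = 0"
    using tr by simp
  then show ?thesis
    using has_sum_infsum[OF summ] by simp
qed

theorem lemma3p4:
  fixes D :: "nat set"
    and A :: "'n::finite \<Rightarrow> ((nat \<Rightarrow> complex) \<Rightarrow> (nat \<Rightarrow> complex))"
  assumes "D \<noteq> {}"
    and "\<And>i. trace_class D (A i)"
    and "\<And>i. self_adjoint_op D (A i)"
    and "\<And>i. op_trace D (A i) = 0"
    and "convex (joint_numerical_range D A)"
  shows "\<exists>z\<in>l2 D. l2norm D z = 1 \<and> (\<forall>i. cinner D z (A i z) = 0)"
proof -
  have H: "hermitian_op D (A i)" for i
    using assms(3) by (rule self_adjoint_op_hermitian)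
  define v where "v k = (\<chi> i. Re (cinner D (basis_vec k) (A i (basis_vec k))))" for k
  have "v ` D \<subseteq> joint_numerical_range D A"
    unfolding v_def joint_numerical_range_def using basis_vec_in_l2 l2norm_basis_vec by blast
  then have "convex hull (v ` D) \<subseteq> joint_numerical_range D A"
    using assms(5) by (rule hull_minimal)
  moreover have "0 \<in> convex hull (v ` D)"
    using assms(1) trace_zero_diag_has_sum[OF H assms(2,4)]
    by (intro zero_in_convex_hull_if_has_sum_zero) (simp_all add: v_def)
  ultimately obtain z where z: "z \<in> l2 D" "l2norm D z = 1" and "(\<chi> i. Re (cinner D z (A i z))) = 0"
    unfolding joint_numerical_range_def by force
  then have re: "Re (cinner D z (A i z)) = 0" for i
    by (metis vec_lambda_beta zero_index)
  have "cinner D z (A i z) = 0" for i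
    using hermitian_op_cinner_real[OF H[of i] z(1)] re[of i] by (metis of_real_0)
  with z show ?thesis
    by blast
qed

end
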